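(* Let $(\mathfrak h\oplus\mathfrak h^*,[\cdot,\cdot],[\![\cdot,\cdot,\cdot]\!];\omega_p)$ be a phase space of a Lie-Yamaguti algebra $(\mathfrak h,[\cdot,\cdot]_{\mathfrak h},[\![\cdot,\cdot,\cdot]\!]_{\mathfrak h})$, and let $(\mathfrak h\oplus\mathfrak h^*,*,\{\cdot,\cdot,\cdot\})$ be its compatible pre-Lie-Yamaguti algebra, defined by $\omega_p(X*Y,Z)=-\omega_p(Y,[X,Z])$ and $\omega_p(\{X,Y,Z\},W)=\omega_p(X,[\![W,Z,Y]\!])$ for $X,Y,Z,W\in\mathfrak h\oplus\mathfrak h^*$. Then both $\mathfrak h$ and $\mathfrak h^*$ are closed under $*$ and $\{\cdot,\cdot,\cdot\}$, i.e. $(\mathfrak h,*|_{\mathfrak h},\{\cdot,\cdot,\cdot\}|_{\mathfrak h})$ and $(\mathfrak h^*,*|_{\mathfrak h^*},\{\cdot,\cdot,\cdot\}|_{\mathfrak h^*})$ are subalgebras of the pre-Lie-Yamaguti algebra $(\mathfrak h\oplus\mathfrak h^*,*,\{\cdot,\cdot,\cdot\})$.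
   Context: All vector spaces are over a field of characteristic $0$ and finite-dimensional. A Lie-Yamaguti algebra is a vector space $\mathfrak g$ with a bilinear skew-symmetric $[\cdot,\cdot]$ and a trilinear $[\![\cdot,\cdot,\cdot]\!]$ skew-symmetric in its first two arguments such that for all $x,y,z,w,t$: (1) $[[x,y],z]+[[y,z],x]+[[z,x],y]+[\![x,y,z]\!]+[\![y,z,x]\!]+[\![z,x,y]\!]=0$; (2) $[\![[x,y],z,w]\!]+[\![[y,z],x,w]\!]+[\![[z,x],y,w]\!]=0$; (3) $[\![x,y,[z,w]]\!]=[[\![x,y,z]\!],w]+[z,[\![x,y,w]\!]]$; (4) $[\![x,y,[\![z,w,t]\!]]\!]=[\![[\![x,y,z]\!],w,t]\!]+[\![z,[\![x,y,w]\!],t]\!]+[\![z,w,[\![x,y,t]\!]]\!]$. A symplectic structure on it is a nondegenerate skew-symmetric bilinear form $\omega$ with $\omega(x,[y,z])+\omega(y,[z,x])+\omega(z,[x,y])=0$ and $\omega(z,[\![x,y,w]\!])-\omega(x,[\![w,z,y]\!])+\omega(y,[\![w,z,x]\!])-\omega(w,[\![x,y,z]\!])=0$; for a symplectic Lie-Yamaguti algebra, the two displayed formulas define a pre-Lie-Yamaguti algebra structure whose subadjacent Lie-Yamaguti algebra is the given one (its compatible pre-Lie-Yamaguti algebra). On $\mathfrak h\oplus\mathfrak h^*$, $\omega_p(x+\alpha,y+\beta)=\langle\alpha,y\rangle-\langle\beta,x\rangle$. A phase space of $\mathfrak h$ is a Lie-Yamaguti algebra structure on $\mathfrak h\oplus\mathfrak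 h^*$ for which $\omega_p$ is a symplectic structure and such that $\mathfrak h$ (with its original brackets) and $\mathfrak h^*$ are Lie-Yamaguti subalgebras. A pre-Lie-Yamaguti algebra is a vector space with a bilinear operation $*$ and a trilinear operation $\{\cdot,\cdot,\cdot\}$ satisfying the pre-Lie-Yamaguti axioms; a subalgebra is a subspace closed under both operations. *)

theory Defs
  imports "HOL-Library.Function_Algebras" "HOL-Library.Product_Plus"
begin

definition bilinear_op :: "('k::field \<Rightarrow> 'v::ab_group_add \<Rightarrow> 'v) \<Rightarrow> ('v \<Rightarrow> 'v \<Rightarrow> 'v) \<Rightarrow> bool" where
  "bilinear_op sm B \<longleftrightarrow>
     (\<forall>x y z. B (x + y) z = B x z + B y z) \<and> (\<forall>x y z. B x (y + z) = B x y + B x z) \<and>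
     (\<forall>c x y. B (sm c x) y = sm c (B x y)) \<and> (\<forall>c x y. B x (sm c y) = sm c (B x y))"

definition trilinear_op :: "('k::field \<Rightarrow> 'v::ab_group_add \<Rightarrow> 'v) \<Rightarrow> ('v \<Rightarrow> 'v \<Rightarrow> 'v \<Rightarrow> 'v) \<Rightarrow> bool" where
  "trilinear_op sm T \<longleftrightarrow>
     (\<forall>x x' y z. T (x + x') y z = T x y z + T x' y z) \<and>
     (\<forall>x y y' z. T x (y + y') z = T x y z + T x y' z) \<and>
     (\<forall>x y z z'. T x y (z + z') = T x y z + T x y z') \<and>
     (\<forall>c x y z. T (sm c x) y z = sm c (T x y z)) \<and>
     (\<forall>c x y z. T x (sm c y) z = sm c (T x y z)) \<and>
     (\<forall>c x y z. T x y (sm c z) = sm c (T x y z))"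

definition bilinear_form :: "('k::field \<Rightarrow> 'v::ab_group_add \<Rightarrow> 'v) \<Rightarrow> ('v \<Rightarrow> 'v \<Rightarrow> 'k) \<Rightarrow> bool" where
  "bilinear_form sm w \<longleftrightarrow>
     (\<forall>x y z. w (x + y) z = w x z + w y z) \<and> (\<forall>x y z. w x (y + z) = w x y + w x z) \<and>
     (\<forall>c x y. w (sm c x) y = c * w x y) \<and> (\<forall>c x y. w x (sm c y) = c * w x y)"

definition LY_algebra :: "('k::field \<Rightarrow> 'v::ab_group_add \<Rightarrow> 'v) \<Rightarrow> ('v \<Rightarrow> 'v \<Rightarrow> 'v) \<Rightarrow> ('v \<Rightarrow> 'v \<Rightarrow> 'v \<Rightarrow> 'v) \<Rightarrow> bool" where
  "LY_algebra sm B T \<longleftrightarrow>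
     bilinear_op sm B \<and> trilinear_op sm T \<and>
     (\<forall>x y. B x y = - B y x) \<and>
     (\<forall>x y z. T x y z = - T y x z) \<and>
     (\<forall>x y z. B (B x y) z + B (B y z) x + B (B z x) y + T x y z + T y z x + T z x y = 0) \<and>
     (\<forall>x y z w. T (B x y) z w + T (B y z) x w + T (B z x) y w = 0) \<and>
     (\<forall>x y z w. T x y (B z w) = B (T x y z) w + B z (T x y w)) \<and>
     (\<forall>x y z w t. T x y (T z w t) = T (T x y z) w t + T z (T x y w) t + T z w (T x y t))"

definition symplectic_structure :: "('k::field \<Rightarrow> 'v::ab_group_add \<Rightarrow> 'v) \<Rightarrow> ('v \<Rightarrow> 'v \<Rightarrow> 'v) \<Rightarrow> ('v \<Rightarrow> 'v \<Rightarrow> 'v \<Rightarrow> 'v) \<Rightarrow> ('v \<Rightarrow> 'v \<Rightarrow> 'k) \<Rightarrow> bool" where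
  "symplectic_structure sm B T w \<longleftrightarrow>
     bilinear_form sm w \<and>
     (\<forall>x y. w x y = - w y x) \<and>
     (\<forall>x. (\<forall>y. w x y = 0) \<longrightarrow> x = 0) \<and>
     (\<forall>x y z. w x (B y z) + w y (B z x) + w z (B x y) = 0) \<and>
     (\<forall>x y z u. w z (T x y u) - w x (T u z y) + w y (T u z x) - w u (T x y z) = 0)"

text \<open>A finite-dimensional vector space h is modelled as 'n \<Rightarrow> 'k with 'n finite,
its dual h* also as 'n \<Rightarrow> 'k via the standard pairing, and h \<oplus> h* as pairs.\<close>

definition vsm :: "'k::field \<Rightarrow> ('n \<Rightarrow> 'k) \<Rightarrow> ('n \<Rightarrow> 'k)" where
  "vsm c x = (\<lambda>i. c * x i)"

definition psm :: "'k::field \<Rightarrow> ('n \<Rightarrow> 'k) \<times> ('n \<Rightarrow> 'k) \<Rightarrow> ('n \<Rightarrow> 'k) \<times> ('n \<Rightarrow> 'k)" where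
  "psm c p = (vsm c (fst p), vsm c (snd p))"

definition dpair :: "('n::finite \<Rightarrow> 'k::field) \<Rightarrow> ('n \<Rightarrow> 'k) \<Rightarrow> 'k" where
  "dpair \<alpha> x = (\<Sum>i\<in>UNIV. \<alpha> i * x i)"

definition omega_p :: "('n::finite \<Rightarrow> 'k::field) \<times> ('n \<Rightarrow> 'k) \<Rightarrow> ('n \<Rightarrow> 'k) \<times> ('n \<Rightarrow> 'k) \<Rightarrow> 'k" where
  "omega_p X Y = dpair (snd X) (fst Y) - dpair (snd Y) (fst X)"

definition h_part :: "(('n \<Rightarrow> 'k::zero) \<times> ('n \<Rightarrow> 'k)) set" where
  "h_part = {p. snd p = 0}"

definition hdual_part :: "(('n \<Rightarrow> 'k::zero) \<times> ('n \<Rightarrow> 'k)) set" where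
  "hdual_part = {p. fst p = 0}"

definition phase_space ::
  "(('n::finite \<Rightarrow> 'k::field) \<Rightarrow> ('n \<Rightarrow> 'k) \<Rightarrow> ('n \<Rightarrow> 'k)) \<Rightarrow>
   (('n \<Rightarrow> 'k) \<Rightarrow> ('n \<Rightarrow> 'k) \<Rightarrow> ('n \<Rightarrow> 'k) \<Rightarrow> ('n \<Rightarrow> 'k)) \<Rightarrow>
   (('n \<Rightarrow> 'k) \<times> ('n \<Rightarrow> 'k) \<Rightarrow> ('n \<Rightarrow> 'k) \<times> ('n \<Rightarrow> 'k) \<Rightarrow> ('n \<Rightarrow> 'k) \<times> ('n \<Rightarrow> 'k)) \<Rightarrow>
   (('n \<Rightarrow> 'k) \<times> ('n \<Rightarrow> 'k) \<Rightarrow> ('n \<Rightarrow> 'k) \<times> ('n \<Rightarrow> 'k) \<Rightarrow> ('n \<Rightarrow> 'k) \<times> ('n \<Rightarrow> 'k) \<Rightarrow> ('n \<Rightarrow> 'k) \<times> ('n \<Rightarrow> 'k)) \<Rightarrow> bool" where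
  "phase_space Bh Th B T \<longleftrightarrow>
     LY_algebra psm B T \<and> symplectic_structure psm B T omega_p \<and>
     (\<forall>x y. B (x, 0) (y, 0) = (Bh x y, 0)) \<and>
     (\<forall>x y z. T (x, 0) (y, 0) (z, 0) = (Th x y z, 0)) \<and>
     (\<forall>X\<in>hdual_part. \<forall>Y\<in>hdual_part. B X Y \<in> hdual_part) \<and>
     (\<forall>X\<in>hdual_part. \<forall>Y\<in>hdual_part. \<forall>Z\<in>hdual_part. T X Y Z \<in> hdual_part)"

end

theory Submission
  imports Defs
begin

text \<open>Both \<open>h\<close> and \<open>h\<^sup>*\<close> are Lagrangian for \<open>\<omega>\<^sub>p\<close>, i.e. each is its own
\<open>\<omega>\<^sub>p\<close>-orthogonal complement, and both are closed under the brackets. Any such \<open>L\<close> is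
closed under the compatible operations: for \<open>X, Y, Z, W \<in> L\<close> the defining identities give
\<open>\<omega>(X * Y, Z) = -\<omega>(Y, [X, Z]) = 0\<close> and \<open>\<omega>({X, Y, Z}, W) = \<omega>(X, [[W, Z, Y]]) = 0\<close>,
so \<open>X * Y\<close> and \<open>{X, Y, Z}\<close> lie in \<open>L\<^sup>\<bottom> = L\<close>.\<close>

definition symp_orth :: "('v \<Rightarrow> 'v \<Rightarrow> 'k::zero) \<Rightarrow> 'v set \<Rightarrow> 'v set" where
  "symp_orth w L = {P. \<forall>Q\<in>L. w P Q = 0}"

lemma compatible_ops_closed_if_Lagrangian:
  fixes w :: "'v \<Rightarrow> 'v \<Rightarrow> 'k::group_add"
  assumes Lagrangian: "symp_orth w L = L"
    and B_closed: "\<And>X Y. X \<in> L \<Longrightarrow> Y \<in> L \<Longrightarrow> B X Y \<in> L"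
    and T_closed: "\<And>X Y Z. X \<in> L \<Longrightarrow> Y \<in> L \<Longrightarrow> Z \<in> L \<Longrightarrow> T X Y Z \<in> L"
    and star_def: "\<And>X Y Z. w (star X Y) Z = - w Y (B X Z)"
    and brace_def: "\<And>X Y Z W. w (brace X Y Z) W = w X (T W Z Y)"
  shows "(\<forall>X\<in>L. \<forall>Y\<in>L. star X Y \<in> L) \<and> (\<forall>X\<in>L. \<forall>Y\<in>L. \<forall>Z\<in>L. brace X Y Z \<in> L)"
proof -
  have isotropic: "w P Q = 0" if "P \<in> L" "Q \<in> L" for P Q
    using that Lagrangian by (auto simp: symp_orth_def)
  have "star X Y \<in> symp_orth w L" if "X \<in> L" "Y \<in> L" for X Y
    using that by (simp add: symp_orth_def star_def isotropic B_closed)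
  moreover have "brace X Y Z \<in> symp_orth w L" if "X \<in> L" "Y \<in> L" "Z \<in> L" for X Y Z
    using that by (simp add: symp_orth_def brace_def isotropic T_closed)
  ultimately show ?thesis
    using Lagrangian by blast
qed

lemma dpair_indicator_left: "dpair (\<lambda>j. if j = i then 1 else 0) x = x i"
proof -
  have "dpair (\<lambda>j. if j = i then 1 else 0) x = (\<Sum>j\<in>UNIV. if j = i then x j else 0)"
    unfolding dpair_def by (rule sum.cong) auto
  then show ?thesis
    by simp
qed

lemma dpair_indicator_right: "dpair a (\<lambda>j. if j = i then 1 else 0) = a i"
  by (simp add: dpair_def if_distrib cong: if_cong)

lemma dpair_eq_0_left: "(\<And>x. dpair a x = 0) \<Longrightarrow> a = 0"
  by (rule ext) (metis dpair_indicator_right zero_fun_def)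

lemma dpair_eq_0_right: "(\<And>a. dpair a x = 0) \<Longrightarrow> x = 0"
  by (rule ext) (metis dpair_indicator_left zero_fun_def)

lemma symp_orth_h_part: "symp_orth omega_p h_part = (h_part :: (('n::finite \<Rightarrow> 'k::field) \<times> _) set)"
proof (intro set_eqI iffI)
  fix P :: "('n \<Rightarrow> 'k) \<times> ('n \<Rightarrow> 'k)"
  assume "P \<in> symp_orth omega_p h_part"
  then have "dpair (snd P) x = 0" for x
    using bspec[of _ _ "(x, 0)"] by (auto simp: symp_orth_def h_part_def omega_p_def dpair_def)
  then show "P \<in> h_part"
    by (simp add: h_part_def dpair_eq_0_left)
qed (auto simp: symp_orth_def h_part_def omega_p_def dpair_def)

lemma symp_orth_hdual_part: "symp_orth omega_p hdual_part = (hdual_part :: (('n::finite \<Rightarrow> 'k::field) \<times> _) set)"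
proof (intro set_eqI iffI)
  fix P :: "('n \<Rightarrow> 'k) \<times> ('n \<Rightarrow> 'k)"
  assume "P \<in> symp_orth omega_p hdual_part"
  then have "dpair a (fst P) = 0" for a
    using bspec[of _ _ "(0, a)"] by (auto simp: symp_orth_def hdual_part_def omega_p_def dpair_def)
  then show "P \<in> hdual_part"
    by (simp add: hdual_part_def dpair_eq_0_right)
qed (auto simp: symp_orth_def hdual_part_def omega_p_def dpair_def)

lemma h_part_iff: "X \<in> h_part \<longleftrightarrow> (\<exists>x. X = (x, 0))"
  by (cases X) (simp add: h_part_def)

lemma phase_space_h_part_closed:
  assumes "phase_space Bh Th B T"
  shows "X \<in> h_part \<Longrightarrow> Y \<in> h_part \<Longrightarrow> B X Y \<in> h_part"
    and "X \<in> h_part \<Longrightarrow> Y \<in> h_part \<Longrightarrow> Z \<in> h_part \<Longrightarrow> T X Y Z \<in> h_part"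
proof -
  have "B (x, 0) (y, 0) = (Bh x y, 0)" "T (x, 0) (y, 0) (z, 0) = (Th x y z, 0)" for x y z
    using assms by (simp_all add: phase_space_def)
  then show "X \<in> h_part \<Longrightarrow> Y \<in> h_part \<Longrightarrow> B X Y \<in> h_part"
    and "X \<in> h_part \<Longrightarrow> Y \<in> h_part \<Longrightarrow> Z \<in> h_part \<Longrightarrow> T X Y Z \<in> h_part"
    by (auto simp: h_part_iff)
qed

lemma phase_space_hdual_part_closed:
  assumes "phase_space Bh Th B T"
  shows "X \<in> hdual_part \<Longrightarrow> Y \<in> hdual_part \<Longrightarrow> B X Y \<in> hdual_part"
    and "X \<in> hdual_part \<Longrightarrow> Y \<in> hdual_part \<Longrightarrow> Z \<in> hdual_part \<Longrightarrow> T X Y Z \<in> hdual_part"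
  using assms unfolding phase_space_def by blast+

theorem corollary4p8:
  fixes Bh :: "('n::finite \<Rightarrow> 'k::field_char_0) \<Rightarrow> ('n \<Rightarrow> 'k) \<Rightarrow> ('n \<Rightarrow> 'k)"
    and Th :: "('n \<Rightarrow> 'k) \<Rightarrow> ('n \<Rightarrow> 'k) \<Rightarrow> ('n \<Rightarrow> 'k) \<Rightarrow> ('n \<Rightarrow> 'k)"
    and B star :: "('n \<Rightarrow> 'k) \<times> ('n \<Rightarrow> 'k) \<Rightarrow> ('n \<Rightarrow> 'k) \<times> ('n \<Rightarrow> 'k) \<Rightarrow> ('n \<Rightarrow> 'k) \<times> ('n \<Rightarrow> 'k)"
    and T brace :: "('n \<Rightarrow> 'k) \<times> ('n \<Rightarrow> 'k) \<Rightarrow> ('n \<Rightarrow> 'k) \<times> ('n \<Rightarrow> 'k) \<Rightarrow> ('n \<Rightarrow> 'k) \<times> ('n \<Rightarrow> 'k) \<Rightarrow> ('n \<Rightarrow> 'k) \<times> ('n \<Rightarrow> 'k)"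
  assumes hLY: "LY_algebra vsm Bh Th"
    and phase: "phase_space Bh Th B T"
    and star_def: "\<And>X Y Z. omega_p (star X Y) Z = - omega_p Y (B X Z)"
    and brace_def: "\<And>X Y Z W. omega_p (brace X Y Z) W = omega_p X (T W Z Y)"
  shows "(\<forall>X\<in>h_part. \<forall>Y\<in>h_part. star X Y \<in> h_part) \<and>
         (\<forall>X\<in>h_part. \<forall>Y\<in>h_part. \<forall>Z\<in>h_part. brace X Y Z \<in> h_part) \<and>
         (\<forall>X\<in>hdual_part. \<forall>Y\<in>hdual_part. star X Y \<in> hdual_part) \<and>
         (\<forall>X\<in>hdual_part. \<forall>Y\<in>hdual_part. \<forall>Z\<in>hdual_part. brace X Y Z \<in> hdual_part)"
proof -
  have "(\<forall>X\<in>h_part. \<forall>Y\<in>h_part. star X Y \<in> h_part) \<and>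
        (\<forall>X\<in>h_part. \<forall>Y\<in>h_part. \<forall>Z\<in>h_part. brace X Y Z \<in> h_part)"
    by (rule compatible_ops_closed_if_Lagrangian[where w = omega_p and L = h_part and B = B and T = T,
          OF symp_orth_h_part phase_space_h_part_closed[OF phase] star_def brace_def])
  moreover have "(\<forall>X\<in>hdual_part. \<forall>Y\<in>hdual_part. star X Y \<in> hdual_part) \<and>
        (\<forall>X\<in>hdual_part. \<forall>Y\<in>hdual_part. \<forall>Z\<in>hdual_part. brace X Y Z \<in> hdual_part)"
    by (rule compatible_ops_closed_if_Lagrangian[where w = omega_p and L = hdual_part and B = B and T = T,
          OF symp_orth_hdual_part phase_space_hdual_part_closed[OF phase] star_def brace_def])
  ultimately show ?thesis
    by blast
qed

end
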